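(* Let $K$ be an infinite commutative domain, let $n\ge0$, and let $W_n$ be the $K$-submodule of the free associative algebra $K\langle x,y\rangle$ with basis the monomials $y^ixy^j$, $i+j=n$. Let $\alpha\in W_n$. (i) $\Delta\alpha=0$ if and only if $\alpha$ is a $K$-scalar multiple of $e_n$. (ii) If $\operatorname{char}K=0$ then $\partial\alpha/\partial y=0$ if and only if $\alpha$ is a $K$-scalar multiple of $e_n$.
   Context: Let $V$ be the $K$-submodule of $K\langle x,y\rangle$ spanned by all monomials $y^ixy^j$, $i,j\ge0$. The difference operator $\Delta$ on $V$ is $\Delta\alpha(x,y)=\alpha(x,y+1)-\alpha(x,y)$ (computed in the unital free algebra). $\partial/\partial y$ denotes the unique $K$-derivation of $K\langle x,y\rangle$ sending $y\mapsto1$ and $x\mapsto0$. $e_0=x$, $e_{j+1}=e_jy-ye_j$, so $e_n=\sum_{i=0}^n(-1)^i\binom ni y^ixy^{n-i}$. *)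

theory Defs
  imports Main
begin

text \<open>The free associative unital algebra K<x,y> is modelled as coefficient functions
on words over the alphabet {x,y}; a word is a bool list with True = x and False = y.
Elements of the algebra are the finitely supported such functions.\<close>

type_synonym 'k ncpoly = "bool list \<Rightarrow> 'k"

definition supp :: "'k::zero ncpoly \<Rightarrow> bool list set" where
  "supp p = {w. p w \<noteq> 0}"

definition nc_monom :: "bool list \<Rightarrow> 'k::{zero,one} ncpoly" where
  "nc_monom u = (\<lambda>w. if w = u then 1 else 0)"

definition nc_one :: "'k::{zero,one} ncpoly" where "nc_one = nc_monom []"
definition nc_x :: "'k::{zero,one} ncpoly" where "nc_x = nc_monom [True]"
definition nc_y :: "'k::{zero,one} ncpoly" where "nc_y = nc_monom [False]"

definition nc_add :: "'k::comm_ring_1 ncpoly \<Rightarrow> 'k ncpoly \<Rightarrow> 'k ncpoly" where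
  "nc_add p q = (\<lambda>w. p w + q w)"

definition nc_diff :: "'k::comm_ring_1 ncpoly \<Rightarrow> 'k ncpoly \<Rightarrow> 'k ncpoly" where
  "nc_diff p q = (\<lambda>w. p w - q w)"

definition nc_smult :: "'k::comm_ring_1 \<Rightarrow> 'k ncpoly \<Rightarrow> 'k ncpoly" where
  "nc_smult c p = (\<lambda>w. c * p w)"

definition nc_mult :: "'k::comm_ring_1 ncpoly \<Rightarrow> 'k ncpoly \<Rightarrow> 'k ncpoly" where
  "nc_mult p q = (\<lambda>w. \<Sum>i\<le>length w. p (take i w) * q (drop i w))"

definition nc_eval_word :: "(bool \<Rightarrow> 'k::comm_ring_1 ncpoly) \<Rightarrow> bool list \<Rightarrow> 'k ncpoly" where
  "nc_eval_word \<sigma> u = foldr (\<lambda>a acc. nc_mult (\<sigma> a) acc) u nc_one"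

definition nc_subst :: "(bool \<Rightarrow> 'k::comm_ring_1 ncpoly) \<Rightarrow> 'k ncpoly \<Rightarrow> 'k ncpoly" where
  "nc_subst \<sigma> p = (\<lambda>w. \<Sum>u\<in>supp p. p u * nc_eval_word \<sigma> u w)"

definition nc_Delta :: "'k::comm_ring_1 ncpoly \<Rightarrow> 'k ncpoly" where
  "nc_Delta p = nc_diff (nc_subst (\<lambda>a. if a then nc_x else nc_add nc_y nc_one) p) p"

text \<open>The K-derivation d/dy with y |-> 1, x |-> 0: on a word it is the sum, over all
occurrences of y, of the word with that occurrence deleted (Leibniz rule).\<close>
definition nc_dy_word :: "bool list \<Rightarrow> 'k::comm_ring_1 ncpoly" where
  "nc_dy_word u = (\<lambda>w. of_nat (card {i. i < length u \<and> u ! i = False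
                                   \<and> take i u @ drop (Suc i) u = w}))"

definition nc_dy :: "'k::comm_ring_1 ncpoly \<Rightarrow> 'k ncpoly" where
  "nc_dy p = (\<lambda>w. \<Sum>u\<in>supp p. p u * nc_dy_word u w)"

fun nc_e :: "nat \<Rightarrow> 'k::comm_ring_1 ncpoly" where
  "nc_e 0 = nc_x"
| "nc_e (Suc j) = nc_diff (nc_mult (nc_e j) nc_y) (nc_mult nc_y (nc_e j))"

definition W :: "nat \<Rightarrow> 'k::comm_ring_1 ncpoly set" where
  "W n = {p. \<forall>w. p w \<noteq> 0 \<longrightarrow>
               (\<exists>i j. i + j = n \<and> w = replicate i False @ [True] @ replicate j False)}"

end

theory Submission
  imports Defs
begin

text \<open>Write \<open>\<alpha> = \<Sum>\<^sub>i a\<^sub>i y\<^sup>i x y\<^sup>n\<^sup>-\<^sup>i\<close>. The substitution \<open>y \<mapsto> y + 1\<close> sends \<open>y\<^sup>i x y\<^sup>j\<close> to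
  \<open>\<Sum>\<^sub>k\<^sub>,\<^sub>l (i choose k) (j choose l) y\<^sup>k x y\<^sup>l\<close>, so for \<open>k < n\<close> the coefficient of \<open>y\<^sup>k x\<close> in \<open>\<Delta>\<alpha>\<close>
  is \<open>\<Sum>\<^sub>i (i choose k) a\<^sub>i\<close>. These equations form a unitriangular system in \<open>a\<^sub>0, \<dots>, a\<^sub>n\<^sub>-\<^sub>1\<close>, so
  \<open>\<Delta>\<alpha> = 0\<close> determines \<open>\<alpha>\<close> up to the choice of \<open>a\<^sub>n\<close>; and \<open>e\<^sub>n = \<Sum>\<^sub>i (-1)\<^sup>i (n choose i) y\<^sup>i x y\<^sup>n\<^sup>-\<^sup>i\<close>
  lies in the kernel by an alternating binomial identity. For \<open>\<partial>/\<partial>y\<close>, the coefficient of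
  \<open>y\<^sup>k x y\<^sup>l\<close> with \<open>k + l = n - 1\<close> is \<open>(k + 1) a\<^sub>k\<^sub>+\<^sub>1 + (l + 1) a\<^sub>k\<close>; in characteristic \<open>0\<close> this
  recursion determines \<open>\<alpha>\<close> from \<open>a\<^sub>0\<close>, and the coefficients of \<open>e\<^sub>n\<close> satisfy it.\<close>

section \<open>Words \<open>y\<^sup>i x y\<^sup>j\<close>\<close>

definition yxy :: "nat \<Rightarrow> nat \<Rightarrow> bool list" where
  "yxy i j = replicate i False @ True # replicate j False"

lemma yxy_eq_iff [simp]: "yxy i j = yxy k l \<longleftrightarrow> i = k \<and> j = l"
proof (induction i arbitrary: k)
  case 0
  then show ?case by (cases k) (auto simp: yxy_def)
next
  case (Suc i)
  then show ?case by (cases k) (auto simp: yxy_def)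
qed

lemma yxy_0_left: "yxy 0 j = True # replicate j False"
  by (simp add: yxy_def)

lemma yxy_0_0: "yxy 0 0 = [True]"
  by (simp add: yxy_def)

lemma yxy_Suc_left: "yxy (Suc i) j = False # yxy i j"
  by (simp add: yxy_def)

lemma yxy_Suc_right: "yxy i (Suc j) = yxy i j @ [False]"
  by (simp add: yxy_def replicate_append_same)

lemma length_yxy: "length (yxy i j) = i + 1 + j"
  by (simp add: yxy_def)

lemma nth_yxy: "p < length (yxy i j) \<Longrightarrow> yxy i j ! p = (p = i)"
  by (auto simp: yxy_def nth_append nth_Cons split: nat.split)

lemma delete_yxy:
  assumes "p < length (yxy i j)" "p \<noteq> i"
  shows "take p (yxy i j) @ drop (Suc p) (yxy i j) = (if p < i then yxy (i - 1) j else yxy i (j - 1))"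
proof (cases "p < i")
  case True
  then show ?thesis
    by (auto simp: yxy_def min_def replicate_add[symmetric])
next
  case False
  define q where "q = p - Suc i"
  have q: "p = i + 1 + q" "q < j"
    using False assms by (auto simp: q_def length_yxy)
  then show ?thesis
    by (auto simp: yxy_def replicate_add[symmetric])
qed

lemma nc_mult_letter_left_Nil: "nc_mult (nc_monom [a]) p [] = 0"
  by (simp add: nc_mult_def nc_monom_def)

lemma nc_mult_letter_left_Cons:
  "nc_mult (nc_monom [a]) p (b # v) = (if b = a then p v else 0)"
proof -
  have "nc_mult (nc_monom [a]) p (b # v) = (\<Sum>i\<le>Suc (length v). if i = 1 then (if b = a then p v else 0) else 0)"
    unfolding nc_mult_def nc_monom_def
    by (rule sum.cong) (auto simp: take_Cons' drop_Cons')
  then show ?thesis by (simp only: sum.delta finite_atMost) simp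
qed

lemma nc_mult_letter_right_Nil: "nc_mult p (nc_monom [a]) [] = 0"
  by (simp add: nc_mult_def nc_monom_def)

lemma nc_mult_letter_right_snoc:
  "nc_mult p (nc_monom [a]) (v @ [b]) = (if b = a then p v else 0)"
proof -
  have "nc_mult p (nc_monom [a]) (v @ [b]) = (\<Sum>i\<le>Suc (length v). if i = length v \<and> b = a then p v else 0)"
    unfolding nc_mult_def nc_monom_def
    by (rule sum.cong) (auto simp: le_Suc_eq)
  then show ?thesis by simp
qed

lemma nc_mult_one_left: "nc_mult nc_one p w = p w"
proof -
  have "nc_mult nc_one p w = (\<Sum>i\<le>length w. if i = 0 then p w else 0)"
    unfolding nc_mult_def nc_one_def nc_monom_def by (rule sum.cong) auto
  then show ?thesis by simp
qed

lemma nc_mult_add_left: "nc_mult (nc_add q r) p w = nc_mult q p w + nc_mult r p w"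
  by (simp add: nc_mult_def nc_add_def distrib_right sum.distrib)

lemma nc_mult_y_left_yxy: "nc_mult nc_y p (yxy i j) = (case i of 0 \<Rightarrow> 0 | Suc i' \<Rightarrow> p (yxy i' j))"
  by (cases i) (simp_all add: nc_y_def yxy_0_left yxy_Suc_left nc_mult_letter_left_Cons)

lemma nc_mult_y_right_yxy: "nc_mult p nc_y (yxy i j) = (case j of 0 \<Rightarrow> 0 | Suc j' \<Rightarrow> p (yxy i j'))"
proof (cases j)
  case 0
  have "yxy i 0 = replicate i False @ [True]" by (simp add: yxy_def)
  then show ?thesis using 0 by (simp add: nc_y_def nc_mult_letter_right_snoc)
qed (simp add: nc_y_def yxy_Suc_right nc_mult_letter_right_snoc)

section \<open>The modules \<open>V\<close> and \<open>W\<^sub>n\<close>\<close>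

definition V :: "'k::zero ncpoly set" where
  "V = {p. \<forall>w. p w \<noteq> 0 \<longrightarrow> (\<exists>k l. w = yxy k l)}"

lemma mem_W_iff: "p \<in> W n \<longleftrightarrow> (\<forall>w. p w \<noteq> 0 \<longrightarrow> (\<exists>i j. i + j = n \<and> w = yxy i j))"
  by (simp add: W_def yxy_def)

lemma W_subset_V: "W n \<subseteq> V"
  using mem_W_iff unfolding V_def by blast

lemma V_eq_0_iff: "p \<in> V \<Longrightarrow> p = (\<lambda>_. 0) \<longleftrightarrow> (\<forall>k l. p (yxy k l) = 0)"
  by (auto simp: V_def)

lemma W_yxy_eq_0: "p \<in> W n \<Longrightarrow> i + j \<noteq> n \<Longrightarrow> p (yxy i j) = 0"
  by (auto simp: mem_W_iff)

lemma W_eqI: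
  assumes "p \<in> W n" "q \<in> W n" "\<And>i. i \<le> n \<Longrightarrow> p (yxy i (n - i)) = q (yxy i (n - i))"
  shows "p = q"
proof
  fix w
  show "p w = q w"
  proof (cases "\<exists>i\<le>n. w = yxy i (n - i)")
    case True
    then show ?thesis using assms(3) by auto
  next
    case False
    then have "\<nexists>i j. i + j = n \<and> w = yxy i j"
      by (metis add_diff_cancel_left' le_add1)
    then show ?thesis using assms(1,2) by (metis mem_W_iff)
  qed
qed

lemma nc_smult_in_W: "p \<in> W n \<Longrightarrow> nc_smult c p \<in> W n"
  by (simp add: mem_W_iff nc_smult_def) (metis mult_zero_right)

lemma sum_supp_W:
  assumes "p \<in> W n"
  shows "(\<Sum>u\<in>supp p. p u * g u) = (\<Sum>i\<le>n. p (yxy i (n - i)) * g (yxy i (n - i)))"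
proof -
  have "supp p \<subseteq> (\<lambda>i. yxy i (n - i)) ` {..n}"
    using assms by (force simp: mem_W_iff supp_def)
  then have "(\<Sum>u\<in>supp p. p u * g u) = (\<Sum>u\<in>(\<lambda>i. yxy i (n - i)) ` {..n}. p u * g u)"
    by (intro sum.mono_neutral_left) (auto simp: supp_def)
  also have "\<dots> = (\<Sum>i\<le>n. p (yxy i (n - i)) * g (yxy i (n - i)))"
    by (subst sum.reindex) (auto simp: inj_on_def)
  finally show ?thesis .
qed

section \<open>The elements \<open>e\<^sub>n\<close>\<close>

lemma nc_e_Suc_apply: "nc_e (Suc n) w = nc_mult (nc_e n) nc_y w - nc_mult nc_y (nc_e n) w"
  by (simp add: nc_diff_def)

lemma nc_e_yxy: "nc_e n (yxy i j) = (if i + j = n then (-1)^i * of_nat (n choose i) else 0)"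
proof (induction n arbitrary: i j)
  case 0
  show ?case by (auto simp: nc_x_def nc_monom_def yxy_0_0[symmetric])
next
  case (Suc n)
  show ?case
    by (cases i; cases j) (auto simp: nc_e_Suc_apply nc_mult_y_left_yxy nc_mult_y_right_yxy Suc.IH algebra_simps simp del: nc_e.simps)
qed

lemma nc_e_in_W: "(nc_e n :: 'k::comm_ring_1 ncpoly) \<in> W n"
  unfolding mem_W_iff
proof (induction n)
  case 0
  show ?case by (auto simp: nc_x_def nc_monom_def yxy_0_0[symmetric])
next
  case (Suc n)
  show ?case
  proof (intro allI impI)
    fix w :: "bool list"
    assume "nc_e (Suc n) w \<noteq> (0::'k)"
    then have "nc_mult (nc_e n) nc_y w - nc_mult nc_y (nc_e n) w \<noteq> (0::'k)"
      by (metis nc_e_Suc_apply)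
    then consider "nc_mult (nc_e n) nc_y w \<noteq> (0::'k)" | "nc_mult nc_y (nc_e n) w \<noteq> (0::'k)"
      by force
    then show "\<exists>i j. i + j = Suc n \<and> w = yxy i j"
    proof cases
      case 1
      then obtain v where w: "w = v @ [False]" and "nc_e n v \<noteq> (0::'k)"
        by (cases w rule: rev_cases) (auto simp: nc_y_def nc_mult_letter_right_Nil nc_mult_letter_right_snoc split: if_splits)
      with Suc.IH obtain i j where "i + j = n" "v = yxy i j" by blast
      with w show ?thesis by (intro exI[of _ i] exI[of _ "Suc j"]) (simp add: yxy_Suc_right)
    next
      case 2
      then obtain v where w: "w = False # v" and "nc_e n v \<noteq> (0::'k)"
        by (cases w) (auto simp: nc_y_def nc_mult_letter_left_Nil nc_mult_letter_left_Cons split: if_splits)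
      with Suc.IH obtain i j where "i + j = n" "v = yxy i j" by blast
      with w show ?thesis by (intro exI[of _ "Suc i"] exI[of _ j]) (simp add: yxy_Suc_left)
    qed
  qed
qed

lemma smult_nc_e_in_W: "nc_smult c (nc_e n) \<in> W n"
  by (intro nc_smult_in_W nc_e_in_W)

lemma nc_smult_nc_e_yxy:
  "nc_smult c (nc_e n) (yxy i j) = (if i + j = n then c * ((-1)^i * of_nat (n choose i)) else 0)"
  by (simp add: nc_smult_def nc_e_yxy)

section \<open>The difference operator\<close>

definition y_shift :: "bool \<Rightarrow> 'k::comm_ring_1 ncpoly" where
  "y_shift a = (if a then nc_x else nc_add nc_y nc_one)"

lemma nc_Delta_y_shift: "nc_Delta p = nc_diff (nc_subst y_shift p) p"
  by (simp add: nc_Delta_def y_shift_def[abs_def])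

lemma nc_eval_word_x_Cons:
  "nc_eval_word y_shift (True # u) w = nc_mult nc_x (nc_eval_word y_shift u) w"
  by (simp add: nc_eval_word_def y_shift_def)

lemma nc_eval_word_y_Cons:
  "nc_eval_word y_shift (False # u) w = nc_mult nc_y (nc_eval_word y_shift u) w + nc_eval_word y_shift u w"
  by (simp add: nc_eval_word_def y_shift_def nc_mult_add_left nc_mult_one_left)

lemma nc_eval_word_replicate_y:
  "nc_eval_word y_shift (replicate j False) w =
     (if w = replicate (length w) False then of_nat (j choose length w) else 0)"
proof (induction j arbitrary: w)
  case 0
  show ?case by (cases w) (simp_all add: nc_eval_word_def nc_one_def nc_monom_def)
next
  case (Suc j)
  show ?case
    by (cases w) (auto simp: nc_eval_word_y_Cons nc_y_def nc_mult_letter_left_Nil nc_mult_letter_left_Cons Suc.IH)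
qed

lemma nc_eval_word_Suc_yxy:
  "nc_eval_word y_shift (yxy (Suc i) j) w =
     nc_mult nc_y (nc_eval_word y_shift (yxy i j)) w + nc_eval_word y_shift (yxy i j) w"
  by (simp only: yxy_Suc_left nc_eval_word_y_Cons)

lemma nc_eval_word_yxy:
  "nc_eval_word y_shift (yxy i j) (yxy k l) = of_nat (i choose k) * of_nat (j choose l)"
proof (induction i arbitrary: k)
  case 0
  show ?case
    by (cases k) (simp_all add: yxy_0_left yxy_Suc_left nc_eval_word_x_Cons nc_x_def
        nc_mult_letter_left_Cons nc_eval_word_replicate_y)
next
  case (Suc i)
  show ?case
    by (cases k) (simp_all add: nc_eval_word_Suc_yxy nc_mult_y_left_yxy Suc.IH algebra_simps)
qed

lemma nc_eval_word_yxy_in_V: "(nc_eval_word y_shift (yxy i j) :: 'k::comm_ring_1 ncpoly) \<in> V"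
  unfolding V_def
proof (induction i)
  case 0
  show ?case
  proof (intro CollectI allI impI)
    fix w assume "nc_eval_word y_shift (yxy 0 j) w \<noteq> (0::'k)"
    then obtain v where w: "w = True # v" and "nc_eval_word y_shift (replicate j False) v \<noteq> (0::'k)"
      by (cases w) (auto simp: yxy_0_left nc_eval_word_x_Cons nc_x_def nc_mult_letter_left_Nil
          nc_mult_letter_left_Cons split: if_splits)
    then have "v = replicate (length v) False"
      by (simp add: nc_eval_word_replicate_y split: if_splits)
    with w show "\<exists>k l. w = yxy k l" by (metis yxy_0_left)
  qed
next
  case (Suc i)
  show ?case
  proof (intro CollectI allI impI)
    fix w assume "nc_eval_word y_shift (yxy (Suc i) j) w \<noteq> (0::'k)"
    then consider "nc_eval_word y_shift (yxy i j) w \<noteq> (0::'k)"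
      | "nc_mult nc_y (nc_eval_word y_shift (yxy i j)) w \<noteq> (0::'k)"
      unfolding nc_eval_word_Suc_yxy by force
    then show "\<exists>k l. w = yxy k l"
    proof cases
      case 1
      with Suc.IH show ?thesis by blast
    next
      case 2
      then obtain v where w: "w = False # v" and "nc_eval_word y_shift (yxy i j) v \<noteq> (0::'k)"
        by (cases w) (auto simp: nc_y_def nc_mult_letter_left_Nil nc_mult_letter_left_Cons split: if_splits)
      with Suc.IH obtain k l where "v = yxy k l" by blast
      with w show ?thesis by (metis yxy_Suc_left)
    qed
  qed
qed

lemma nc_subst_W_apply:
  "p \<in> W n \<Longrightarrow> nc_subst \<sigma> p w = (\<Sum>i\<le>n. p (yxy i (n - i)) * nc_eval_word \<sigma> (yxy i (n - i)) w)"
  unfolding nc_subst_def by (rule sum_supp_W)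

lemma nc_Delta_W_yxy:
  assumes "p \<in> W n"
  shows "nc_Delta p (yxy k l) =
    (\<Sum>i\<le>n. p (yxy i (n - i)) * (of_nat (i choose k) * of_nat ((n - i) choose l))) - p (yxy k l)"
  using assms by (simp add: nc_Delta_y_shift nc_diff_def nc_subst_W_apply nc_eval_word_yxy)

lemma nc_Delta_W_in_V:
  fixes p :: "'k::comm_ring_1 ncpoly"
  assumes "p \<in> W n"
  shows "nc_Delta p \<in> V"
proof (unfold V_def, intro CollectI allI impI, rule ccontr)
  fix w assume Delta: "nc_Delta p w \<noteq> 0" and not_yxy: "\<nexists>k l. w = yxy k l"
  have "nc_eval_word y_shift (yxy i (n - i)) w = (0::'k)" for i
    using not_yxy nc_eval_word_yxy_in_V unfolding V_def by blast
  moreover have "p w = 0"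
    using not_yxy assms W_subset_V unfolding V_def by blast
  ultimately show False
    using Delta assms by (simp add: nc_Delta_y_shift nc_diff_def nc_subst_W_apply)
qed

section \<open>The derivative \<open>\<partial>/\<partial>y\<close>\<close>

lemma y_deletions_yxy:
  "{p. p < length (yxy i j) \<and> yxy i j ! p = False \<and> take p (yxy i j) @ drop (Suc p) (yxy i j) = w}
     = {p. p < i \<and> w = yxy (i - 1) j} \<union> {p. i < p \<and> p < i + 1 + j \<and> w = yxy i (j - 1)}"
  by (auto simp: nth_yxy delete_yxy length_yxy)

lemma nc_dy_word_yxy_apply:
  "nc_dy_word (yxy i j) w =
     of_nat ((if w = yxy (i - 1) j then i else 0) + (if w = yxy i (j - 1) then j else 0))"
proof -
  have "card ({p. p < i \<and> w = yxy (i - 1) j} \<union> {p. i < p \<and> p < i + 1 + j \<and> w = yxy i (j - 1)})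
      = card {p. p < i \<and> w = yxy (i - 1) j} + card {p. i < p \<and> p < i + 1 + j \<and> w = yxy i (j - 1)}"
    by (rule card_Un_disjoint) auto
  also have "\<dots> = (if w = yxy (i - 1) j then i else 0) + (if w = yxy i (j - 1) then j else 0)"
  proof -
    have "{p. i < p \<and> p < i + 1 + j} = {i<..<i + 1 + j}" by auto
    then show ?thesis by simp
  qed
  finally show ?thesis
    unfolding nc_dy_word_def y_deletions_yxy by simp
qed

lemma nc_dy_word_yxy:
  "nc_dy_word (yxy i j) (yxy k l) =
     (if i = k + 1 \<and> j = l then of_nat i else 0) + (if i = k \<and> j = l + 1 then of_nat j else 0)"
  by (cases i; cases j) (auto simp: nc_dy_word_yxy_apply)

lemma nc_dy_word_yxy_in_V: "nc_dy_word (yxy i j) \<in> V"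
  by (auto simp: V_def nc_dy_word_yxy_apply split: if_splits)

lemma nc_dy_W_apply:
  "p \<in> W n \<Longrightarrow> nc_dy p w = (\<Sum>i\<le>n. p (yxy i (n - i)) * nc_dy_word (yxy i (n - i)) w)"
  unfolding nc_dy_def by (rule sum_supp_W)

lemma nc_dy_W_yxy:
  assumes "p \<in> W n"
  shows "nc_dy p (yxy k l) =
    (if k + 1 + l = n then of_nat (k + 1) * p (yxy (k + 1) l) + of_nat (l + 1) * p (yxy k (l + 1)) else 0)"
proof -
  have "nc_dy p (yxy k l) = (\<Sum>i\<le>n.
      (if i = k + 1 then (if k + 1 + l = n then of_nat (k + 1) * p (yxy (k + 1) l) else 0) else 0) +
      (if i = k then (if k + 1 + l = n then of_nat (l + 1) * p (yxy k (l + 1)) else 0) else 0))"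
    unfolding nc_dy_W_apply[OF assms]
    by (intro sum.cong) (auto simp: nc_dy_word_yxy algebra_simps)
  also have "\<dots> = (if k + 1 + l = n then of_nat (k + 1) * p (yxy (k + 1) l) else 0) +
      (if k + 1 + l = n then of_nat (l + 1) * p (yxy k (l + 1)) else 0)"
    by (simp only: sum.distrib sum.delta finite_atMost) auto
  finally show ?thesis by simp
qed

lemma nc_dy_W_in_V:
  fixes p :: "'k::comm_ring_1 ncpoly"
  assumes "p \<in> W n"
  shows "nc_dy p \<in> V"
proof (unfold V_def, intro CollectI allI impI, rule ccontr)
  fix w assume dy: "nc_dy p w \<noteq> 0" and not_yxy: "\<nexists>k l. w = yxy k l"
  have "nc_dy_word (yxy i (n - i)) w = (0::'k)" for i
    using not_yxy nc_dy_word_yxy_in_V unfolding V_def by blast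
  then show False
    using dy by (simp add: nc_dy_W_apply[OF assms])
qed

section \<open>Binomial identities\<close>

lemma choose_mult_triple:
  assumes "k + j + l \<le> n"
  shows "(n choose (k + j)) * ((k + j) choose k) * ((n - (k + j)) choose l)
       = (n choose k) * ((n - k) choose l) * ((n - k - l) choose j)"
proof -
  define N where "N = n - k"
  have "(n choose (k + j)) * ((k + j) choose k) * ((n - (k + j)) choose l)
      = (n choose k) * ((N choose j) * ((N - j) choose l))"
    using choose_mult[of k "k + j" n] assms by (simp add: N_def)
  also have "(N choose j) * ((N - j) choose l) = (N choose (j + l)) * ((j + l) choose j)"
    using choose_mult[of j "j + l" N] assms by (simp add: N_def)
  also have "(j + l) choose j = (j + l) choose l"
    using binomial_symmetric[of j "j + l"] by simp
  also have "(N choose (j + l)) * ((j + l) choose l) = (N choose l) * ((N - l) choose j)"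
    using choose_mult[of l "j + l" N] assms by (simp add: N_def)
  finally show ?thesis
    by (simp add: N_def)
qed

lemma sum_atMost_eq_sum_shifted:
  fixes f :: "nat \<Rightarrow> 'a::comm_monoid_add"
  assumes "k + m \<le> n" and "\<And>i. i \<le> n \<Longrightarrow> i < k \<or> k + m < i \<Longrightarrow> f i = 0"
  shows "(\<Sum>i\<le>n. f i) = (\<Sum>j\<le>m. f (k + j))"
proof -
  have "(\<Sum>i\<le>n. f i) = (\<Sum>i\<in>{k..k + m}. f i)"
    using assms by (intro sum.mono_neutral_right) auto
  also have "\<dots> = (\<Sum>j\<le>m. f (k + j))"
    using sum.shift_bounds_cl_nat_ivl[of f 0 k m] by (simp add: atLeast0AtMost add.commute)
  finally show ?thesis .
qed

lemma alternating_sum_choose_choose: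
  "(\<Sum>i\<le>n. (-1)^i * of_nat (n choose i) * (of_nat (i choose k) * of_nat ((n - i) choose l)))
     = (if k + l = n then (-1)^k * of_nat (n choose k) else (0::'a::comm_ring_1))"
proof -
  define f :: "nat \<Rightarrow> 'a" where
    "f i = (-1)^i * of_nat (n choose i) * (of_nat (i choose k) * of_nat ((n - i) choose l))" for i
  have f_eq_0: "f i = 0" if "i < k \<or> n - i < l" for i
    using that by (auto simp: f_def binomial_eq_0)
  show ?thesis
  proof (cases "k + l \<le> n")
    case False
    then have "f i = 0" if "i \<le> n" for i
      using that f_eq_0[of i] by arith
    with False show ?thesis
      by (simp add: f_def[symmetric])
  next
    case True
    define m where "m = n - k - l"
    have "(\<Sum>i\<le>n. f i) = (\<Sum>j\<le>m. f (k + j))"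
      using True by (intro sum_atMost_eq_sum_shifted) (auto simp: m_def intro!: f_eq_0)
    also have "\<dots> = (\<Sum>j\<le>m. (-1)^k * of_nat (n choose k) * of_nat ((n - k) choose l) * ((-1)^j * of_nat (m choose j)))"
    proof (rule sum.cong)
      fix j assume "j \<in> {..m}"
      then have "k + j + l \<le> n" using True by (simp add: m_def)
      then have "(of_nat (n choose (k + j)) * of_nat ((k + j) choose k) * of_nat ((n - (k + j)) choose l) :: 'a)
          = of_nat (n choose k) * of_nat ((n - k) choose l) * of_nat (m choose j)"
        unfolding m_def by (metis choose_mult_triple of_nat_mult)
      then show "f (k + j) =
          (-1)^k * of_nat (n choose k) * of_nat ((n - k) choose l) * ((-1)^j * of_nat (m choose j))"
        by (simp add: f_def power_add mult_ac)
    qed simp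
    also have "\<dots> = (-1)^k * of_nat (n choose k) * of_nat ((n - k) choose l) * (\<Sum>j\<le>m. (-1)^j * of_nat (m choose j))"
      by (simp add: sum_distrib_left)
    also have "\<dots> = (if k + l = n then (-1)^k * of_nat (n choose k) else 0)"
    proof (cases "k + l = n")
      case True
      then have "m = 0" "n - k = l" by (auto simp: m_def)
      with True show ?thesis by simp
    next
      case False
      with \<open>k + l \<le> n\<close> have "m > 0" by (simp add: m_def)
      with False show ?thesis by (simp add: choose_alternating_sum)
    qed
    finally show ?thesis
      unfolding f_def .
  qed
qed

lemma binomial_triangular_eq_0:
  fixes d :: "nat \<Rightarrow> 'a::comm_ring_1"
  assumes "\<And>k. k < n \<Longrightarrow> (\<Sum>i\<le>n. d i * of_nat (i choose k)) = 0" and "d n = 0" and "k \<le> n"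
  shows "d k = 0"
  using assms(3)
proof (induction "n - k" arbitrary: k rule: less_induct)
  case less
  show ?case
  proof (cases "k = n")
    case True
    with assms(2) show ?thesis by simp
  next
    case False
    with less.prems have "k < n" by simp
    have "d i * of_nat (i choose k) = 0" if "i \<in> {..n} - {k}" for i
    proof (cases "i < k")
      case True
      then show ?thesis by (simp add: binomial_eq_0)
    next
      case False
      with that less.hyps[of i] show ?thesis by auto
    qed
    then have "(\<Sum>i\<le>n. d i * of_nat (i choose k)) = d k"
      using less.prems by (simp add: sum.remove[of "{..n}" k] sum.neutral)
    with assms(1)[OF \<open>k < n\<close>] show ?thesis by simp
  qed
qed

lemma Suc_mult_choose_Suc: "Suc k * (n choose Suc k) = (n - k) * (n choose k)"
  using binomial_absorption[of k n] binomial_absorb_comp[of n k] by simp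

section \<open>Kernels of \<open>\<Delta>\<close> and \<open>\<partial>/\<partial>y\<close> on \<open>W\<^sub>n\<close>\<close>

lemma nc_Delta_smult_nc_e: "nc_Delta (nc_smult c (nc_e n)) = (\<lambda>_. 0)"
proof (subst V_eq_0_iff[OF nc_Delta_W_in_V[OF smult_nc_e_in_W]], intro allI)
  fix k l
  have "nc_Delta (nc_smult c (nc_e n)) (yxy k l)
      = c * (\<Sum>i\<le>n. (-1)^i * of_nat (n choose i) * (of_nat (i choose k) * of_nat ((n - i) choose l)))
        - nc_smult c (nc_e n) (yxy k l)"
    by (simp add: nc_Delta_W_yxy[OF smult_nc_e_in_W] nc_smult_nc_e_yxy sum_distrib_left mult.assoc)
  also have "\<dots> = 0"
    by (simp add: alternating_sum_choose_choose nc_smult_nc_e_yxy)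
  finally show "nc_Delta (nc_smult c (nc_e n)) (yxy k l) = 0" .
qed

lemma nc_Delta_eq_0_imp_smult_nc_e:
  assumes W: "\<alpha> \<in> W n" and Delta: "nc_Delta \<alpha> = (\<lambda>_. 0)"
  shows "\<exists>c. \<alpha> = nc_smult c (nc_e n)"
proof -
  define c where "c = \<alpha> (yxy n 0) * (-1)^n"
  define d where "d i = \<alpha> (yxy i (n - i)) - nc_smult c (nc_e n) (yxy i (n - i))" for i
  have "(\<Sum>i\<le>n. d i * of_nat (i choose k)) = 0" if "k < n" for k
  proof -
    have "(\<Sum>i\<le>n. \<alpha> (yxy i (n - i)) * of_nat (i choose k)) = 0"
      using nc_Delta_W_yxy[OF W, of k 0] W_yxy_eq_0[OF W, of k 0] that Delta by simp
    moreover have "(\<Sum>i\<le>n. nc_smult c (nc_e n) (yxy i (n - i)) * of_nat (i choose k))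
        = c * (\<Sum>i\<le>n. (-1)^i * of_nat (n choose i) * (of_nat (i choose k) * of_nat ((n - i) choose 0)))"
      by (simp add: nc_smult_nc_e_yxy sum_distrib_left mult.assoc)
    moreover have "\<dots> = 0"
      using that by (simp only: alternating_sum_choose_choose) simp
    ultimately show ?thesis
      by (simp add: d_def left_diff_distrib sum_subtractf)
  qed
  moreover have "d n = 0"
  proof -
    have "(-1)^n * (-1)^n = (1::'a)"
      by (simp flip: power_mult_distrib)
    then show ?thesis
      by (simp add: d_def c_def nc_smult_nc_e_yxy mult.assoc)
  qed
  ultimately have "d i = 0" if "i \<le> n" for i
    using binomial_triangular_eq_0 that by blast
  then have "\<alpha> = nc_smult c (nc_e n)"
    by (intro W_eqI[OF W smult_nc_e_in_W]) (simp add: d_def)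
  then show ?thesis ..
qed

lemma nc_dy_smult_nc_e: "nc_dy (nc_smult c (nc_e n)) = (\<lambda>_. 0)"
proof (subst V_eq_0_iff[OF nc_dy_W_in_V[OF smult_nc_e_in_W]], intro allI)
  fix k l
  show "nc_dy (nc_smult c (nc_e n)) (yxy k l) = 0"
  proof (cases "k + 1 + l = n")
    case True
    then have "n - k = l + 1"
      by simp
    then have "Suc k * (n choose Suc k) = (l + 1) * (n choose k)"
      using Suc_mult_choose_Suc[of k n] by simp
    then have binom: "of_nat (k + 1) * of_nat (n choose (k + 1)) = (of_nat (l + 1) * of_nat (n choose k) :: 'a)"
      by (metis Suc_eq_plus1 of_nat_mult)
    have "nc_dy (nc_smult c (nc_e n)) (yxy k l)
        = of_nat (k + 1) * (c * ((-1)^(k + 1) * of_nat (n choose (k + 1))))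
          + of_nat (l + 1) * (c * ((-1)^k * of_nat (n choose k)))"
      using True by (simp add: nc_dy_W_yxy[OF smult_nc_e_in_W] nc_smult_nc_e_yxy)
    also have "\<dots> = c * (-1)^k * (of_nat (l + 1) * of_nat (n choose k) - of_nat (k + 1) * of_nat (n choose (k + 1)))"
      by (simp add: algebra_simps)
    also have "\<dots> = 0"
      by (simp only: binom diff_self mult_zero_right)
    finally show ?thesis .
  next
    case False
    then show ?thesis
      by (simp add: nc_dy_W_yxy[OF smult_nc_e_in_W])
  qed
qed

lemma nc_dy_eq_0_imp_smult_nc_e:
  fixes \<alpha> :: "'k::idom ncpoly"
  assumes W: "\<alpha> \<in> W n" and dy: "nc_dy \<alpha> = (\<lambda>_. 0)" and char: "CHAR('k) = 0"
  shows "\<exists>c. \<alpha> = nc_smult c (nc_e n)"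
proof -
  define a where "a i = \<alpha> (yxy i (n - i))" for i
  have recurrence: "of_nat (Suc k) * a (Suc k) = - (of_nat (n - k) * a k)" if "k < n" for k
  proof -
    have "nc_dy \<alpha> (yxy k (n - Suc k)) = 0" using dy by simp
    with that show ?thesis
      by (simp add: nc_dy_W_yxy[OF W] a_def Suc_diff_Suc eq_neg_iff_add_eq_0)
  qed
  have "a k = a 0 * ((-1)^k * of_nat (n choose k))" if "k \<le> n" for k
    using that
  proof (induction k)
    case 0
    then show ?case by simp
  next
    case (Suc k)
    have nonzero: "of_nat (Suc k) \<noteq> (0::'k)"
      using char of_nat_eq_0_iff_char_dvd[of "Suc k", where 'a='k] by simp
    have "of_nat (Suc k) * a (Suc k) = - (of_nat (n - k) * a k)"
      using Suc.prems by (intro recurrence) simp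
    also have "\<dots> = - (a 0 * (-1)^k * of_nat ((n - k) * (n choose k)))"
      using Suc by (simp add: mult_ac del: of_nat_diff)
    also have "\<dots> = of_nat (Suc k) * (a 0 * ((-1)^Suc k * of_nat (n choose Suc k)))"
      by (simp only: Suc_mult_choose_Suc[symmetric]) (simp add: algebra_simps)
    finally show ?case
      using mult_left_cancel[OF nonzero] by blast
  qed
  then have "\<alpha> = nc_smult (a 0) (nc_e n)"
    by (intro W_eqI[OF W smult_nc_e_in_W]) (simp add: a_def nc_smult_nc_e_yxy)
  then show ?thesis ..
qed

theorem proposition2p4:
  fixes \<alpha> :: "'k::idom ncpoly" and n :: nat
  assumes "infinite (UNIV :: 'k set)"
    and "\<alpha> \<in> W n"
  shows "(nc_Delta \<alpha> = (\<lambda>_. 0) \<longleftrightarrow> (\<exists>c. \<alpha> = nc_smult c (nc_e n)))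
       \<and> (CHAR('k) = 0 \<longrightarrow> (nc_dy \<alpha> = (\<lambda>_. 0) \<longleftrightarrow> (\<exists>c. \<alpha> = nc_smult c (nc_e n))))"
  using nc_Delta_eq_0_imp_smult_nc_e[OF assms(2)] nc_Delta_smult_nc_e
    nc_dy_eq_0_imp_smult_nc_e[OF assms(2)] nc_dy_smult_nc_e
  by blast

end
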